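(* Let $(\mathcal S,\alpha)$ and $(\mathcal S',\beta)$ be IFS quasiarcs (in $\mathbb{R}^n$ and $\mathbb{R}^m$ respectively) with equal similarity dimension. Then $\alpha$ and $\beta$, with their Euclidean metrics, are bi-Lipschitz equivalent.
   Context: Let $\mathcal S=\{S_1,\dots,S_N\}$, $N\ge2$, be contracting similarities of $\mathbb{R}^n$ with ratios $r_i\in(0,1)$ and invariant set $\gamma$ (unique nonempty compact set with $\gamma=\bigcup_iS_i(\gamma)$). $(\mathcal S,\gamma)$ is an IFS path if there are $a,b$ with $S_1(a)=a$, $S_N(b)=b$, $S_i(b)=S_{i+1}(a)$ for $i=1,\dots,N-1$; an IFS arc if moreover $S_i(\gamma)\cap S_{i+1}(\gamma)=\{S_{i+1}(a)\}$ for $i=1,\dots,N-1$ and $S_i(\gamma)\cap S_j(\gamma)=\emptyset$ for $i,j\in\{1,\dots,N\}$, $|i-j|>1$; an IFS quasiarc if moreover $\gamma$ is quasisymmetrically equivalent to $[0,1]$. The similarity dimension is the $s>0$ with $\sum_i r_i^s=1$. *)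

theory Defs
  imports "HOL-Analysis.Analysis"
begin

definition similarity_with_ratio :: "('a::metric_space \<Rightarrow> 'a) \<Rightarrow> real \<Rightarrow> bool" where
  "similarity_with_ratio f c \<longleftrightarrow> (\<forall>x y. dist (f x) (f y) = c * dist x y)"

definition contracting_IFS :: "nat \<Rightarrow> (nat \<Rightarrow> 'a::euclidean_space \<Rightarrow> 'a) \<Rightarrow> (nat \<Rightarrow> real) \<Rightarrow> bool" where
  "contracting_IFS N S r \<longleftrightarrow> N \<ge> 2 \<and>
     (\<forall>i\<in>{1..N}. 0 < r i \<and> r i < 1 \<and> similarity_with_ratio (S i) (r i))"

definition invariant_set :: "nat \<Rightarrow> (nat \<Rightarrow> 'a::euclidean_space \<Rightarrow> 'a) \<Rightarrow> 'a set \<Rightarrow> bool" where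
  "invariant_set N S \<gamma> \<longleftrightarrow> \<gamma> \<noteq> {} \<and> compact \<gamma> \<and> \<gamma> = (\<Union>i\<in>{1..N}. S i ` \<gamma>)"

definition IFS_path :: "nat \<Rightarrow> (nat \<Rightarrow> 'a::euclidean_space \<Rightarrow> 'a) \<Rightarrow> (nat \<Rightarrow> real) \<Rightarrow> 'a set \<Rightarrow> bool" where
  "IFS_path N S r \<gamma> \<longleftrightarrow> contracting_IFS N S r \<and> invariant_set N S \<gamma> \<and>
     (\<exists>a b. S 1 a = a \<and> S N b = b \<and> (\<forall>i\<in>{1..<N}. S i b = S (i+1) a))"

definition IFS_arc :: "nat \<Rightarrow> (nat \<Rightarrow> 'a::euclidean_space \<Rightarrow> 'a) \<Rightarrow> (nat \<Rightarrow> real) \<Rightarrow> 'a set \<Rightarrow> bool" where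
  "IFS_arc N S r \<gamma> \<longleftrightarrow> contracting_IFS N S r \<and> invariant_set N S \<gamma> \<and>
     (\<exists>a b. S 1 a = a \<and> S N b = b \<and> (\<forall>i\<in>{1..<N}. S i b = S (i+1) a) \<and>
        (\<forall>i\<in>{1..<N}. S i ` \<gamma> \<inter> S (i+1) ` \<gamma> = {S (i+1) a}) \<and>
        (\<forall>i\<in>{1..N}. \<forall>j\<in>{1..N}. \<bar>int i - int j\<bar> > 1 \<longrightarrow> S i ` \<gamma> \<inter> S j ` \<gamma> = {}))"

definition quasisymmetric_on :: "'a::metric_space set \<Rightarrow> ('a \<Rightarrow> 'b::metric_space) \<Rightarrow> bool" where
  "quasisymmetric_on A f \<longleftrightarrow> inj_on f A \<and>
     (\<exists>\<eta>::real \<Rightarrow> real. homeomorphism {0..} {0..} \<eta> (inv_into {0..} \<eta>) \<and> strict_mono_on {0..} \<eta> \<and>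
        (\<forall>x\<in>A. \<forall>a\<in>A. \<forall>b\<in>A. \<forall>t\<ge>0. dist x a \<le> t * dist x b \<longrightarrow>
            dist (f x) (f a) \<le> \<eta> t * dist (f x) (f b)))"

definition quasisymmetrically_equivalent :: "'a::metric_space set \<Rightarrow> 'b::metric_space set \<Rightarrow> bool" where
  "quasisymmetrically_equivalent A B \<longleftrightarrow>
     (\<exists>f g. homeomorphism A B f g \<and> quasisymmetric_on A f)"

definition IFS_quasiarc :: "nat \<Rightarrow> (nat \<Rightarrow> 'a::euclidean_space \<Rightarrow> 'a) \<Rightarrow> (nat \<Rightarrow> real) \<Rightarrow> 'a set \<Rightarrow> bool" where
  "IFS_quasiarc N S r \<gamma> \<longleftrightarrow> IFS_arc N S r \<gamma> \<and> quasisymmetrically_equivalent \<gamma> ({0..1} :: real set)"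

definition similarity_dimension :: "nat \<Rightarrow> (nat \<Rightarrow> real) \<Rightarrow> real" where
  "similarity_dimension N r = (THE s. s > 0 \<and> (\<Sum>i=1..N. r i powr s) = 1)"

definition bi_lipschitz_equivalent :: "'a::metric_space set \<Rightarrow> 'b::metric_space set \<Rightarrow> bool" where
  "bi_lipschitz_equivalent A B \<longleftrightarrow>
     (\<exists>f. f ` A = B \<and> (\<exists>C>0. \<forall>x\<in>A. \<forall>y\<in>A.
        dist x y / C \<le> dist (f x) (f y) \<and> dist (f x) (f y) \<le> C * dist x y))"

end

theory Submission
  imports Defs
begin

text \<open>
  Let s be the similarity dimension. Cut [0,1] into N consecutive intervals of lengths
  r_i^s and let phi be the map with phi (tau_i x) = S_i (phi x), where tau_i is the affine map
  of [0,1] onto the i-th interval; phi is the uniform limit of the iterated refinement of any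
  path from a to b, and it maps [0,1] onto the arc. Both sides of
  dist (phi t) (phi u) ~ |t - u|^(1/s) rescale by the same factor r_i under tau_i, so it suffices
  to bound pairs t < u lying in different intervals. For non-adjacent intervals the pieces are at
  positive distance. For adjacent intervals the junction point lies between the images of t and
  u in the homeomorphic copy [0,1], and quasisymmetry turns this into
  dist (phi t) (phi u) >= delta * dist (phi t) (junction); the distance to the junction is
  controlled by the behaviour of phi near the endpoints, which again follows from
  self-similarity. Hence phi is bi-Lipschitz from the snowflake ([0,1], |t - u|^(1/s)) onto the
  arc, and two arcs of equal dimension are bi-Lipschitz equivalent through psi o phi^-1.
\<close>

lemma similarity_dimension_Moran:
  assumes N: "N \<ge> 2" and r: "\<And>i. i \<in> {1..N} \<Longrightarrow> 0 < r i \<and> r i < 1"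
  shows "similarity_dimension N r > 0" "(\<Sum>i=1..N. r i powr similarity_dimension N r) = 1"
proof -
  define F where "F x = (\<Sum>i=1..N. r i powr x)" for x
  have F_strict_antimono: "F y < F x" if "x < y" for x y
    unfolding F_def using N r that by (intro sum_strict_mono) (auto intro: powr_less_mono')
  define \<rho> where "\<rho> = Max (r ` {1..N})"
  have \<rho>: "0 < \<rho>" "\<rho> < 1" "\<And>i. i \<in> {1..N} \<Longrightarrow> r i \<le> \<rho>"
  proof -
    have "\<rho> \<in> r ` {1..N}" unfolding \<rho>_def using N by (intro Max_in) auto
    then show "0 < \<rho>" "\<rho> < 1" using r by auto
    show "\<And>i. i \<in> {1..N} \<Longrightarrow> r i \<le> \<rho>" unfolding \<rho>_def by (intro Max_ge) auto
  qed
  obtain n where n: "\<rho> ^ n < 1 / real N"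
    using real_arch_pow_inv[of "1 / real N" \<rho>] \<rho> N by auto
  have "F (real n) = (\<Sum>i=1..N. r i ^ n)"
    unfolding F_def using r by (intro sum.cong) (auto simp: powr_realpow)
  also have "\<dots> \<le> real N * \<rho> ^ n"
    using sum_mono[of "{1..N}" "\<lambda>i. r i ^ n" "\<lambda>_. \<rho> ^ n"] r \<rho>(3)
    by (simp add: power_mono less_imp_le)
  also have "\<dots> < 1" using n N by (simp add: field_simps)
  finally have "F (real n) \<le> 1" by simp
  have "F 0 = (\<Sum>i=1..N. 1)" unfolding F_def by (intro sum.cong) (use r in fastforce)+
  then have "F 0 = real N" by simp
  then have "1 < F 0" using N by simp
  moreover have "continuous_on {0..real n} F" unfolding F_def
    by (intro continuous_intros) (use r in fastforce)+
  ultimately obtain x where x: "0 \<le> x" "F x = 1"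
    using IVT2'[of F "real n" 1 0] \<open>F (real n) \<le> 1\<close> by auto
  with \<open>1 < F 0\<close> have "x > 0" by (cases "x = 0") auto
  have "\<exists>!s. s > 0 \<and> (\<Sum>i=1..N. r i powr s) = 1"
  proof (rule ex1I[of _ x])
    show "x > 0 \<and> (\<Sum>i=1..N. r i powr x) = 1" using \<open>x > 0\<close> x unfolding F_def by auto
  next
    fix y assume "y > 0 \<and> (\<Sum>i=1..N. r i powr y) = 1"
    with x F_strict_antimono show "y = x" unfolding F_def by (metis less_irrefl neq_iff)
  qed
  from theI'[OF this]
  show "similarity_dimension N r > 0" "(\<Sum>i=1..N. r i powr similarity_dimension N r) = 1"
    unfolding similarity_dimension_def by auto
qed

lemma similarity_with_ratio_continuous_on:
  "similarity_with_ratio f c \<Longrightarrow> 0 \<le> c \<Longrightarrow> continuous_on A f"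
  by (rule lipschitz_on_continuous_on[of c]) (simp add: lipschitz_on_def similarity_with_ratio_def)

lemma holder_continuous_on:
  fixes f :: "real \<Rightarrow> 'a::metric_space"
  assumes "0 < \<alpha>" and holder: "\<And>x y. x \<in> A \<Longrightarrow> y \<in> A \<Longrightarrow> dist (f x) (f y) \<le> C * \<bar>x - y\<bar> powr \<alpha>"
  shows "continuous_on A f"
  unfolding continuous_on_iff
proof (intro ballI allI impI)
  fix x e :: real assume x: "x \<in> A" and "0 < e"
  define B where "B = \<bar>C\<bar> + 1"
  have "0 < B" unfolding B_def by simp
  show "\<exists>d>0. \<forall>y\<in>A. dist y x < d \<longrightarrow> dist (f y) (f x) < e"
  proof (intro exI[of _ "(e / B) powr (1 / \<alpha>)"] conjI ballI impI)
    show "0 < (e / B) powr (1 / \<alpha>)" using \<open>0 < e\<close> \<open>0 < B\<close> by simp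
    fix y assume y: "y \<in> A" and "dist y x < (e / B) powr (1 / \<alpha>)"
    then have "\<bar>y - x\<bar> powr \<alpha> < ((e / B) powr (1 / \<alpha>)) powr \<alpha>"
      using \<open>0 < \<alpha>\<close> by (intro powr_less_mono2) (auto simp: dist_real_def)
    also have "\<dots> = e / B" using \<open>0 < \<alpha>\<close> \<open>0 < e\<close> \<open>0 < B\<close> by (simp add: powr_powr)
    finally have "B * \<bar>y - x\<bar> powr \<alpha> < e" using \<open>0 < B\<close> by (simp add: field_simps)
    moreover have "C * \<bar>y - x\<bar> powr \<alpha> \<le> B * \<bar>y - x\<bar> powr \<alpha>"
      unfolding B_def by (intro mult_right_mono) auto
    then have "dist (f y) (f x) \<le> B * \<bar>y - x\<bar> powr \<alpha>"
      using holder[OF y x] by linarith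
    ultimately show "dist (f y) (f x) < e" by simp
  qed
qed

lemma subset_closed_if_contractions_invariant:
  fixes T :: "'i \<Rightarrow> 'a::heine_borel \<Rightarrow> 'a"
  assumes "compact K" and K: "K \<subseteq> (\<Union>i\<in>I. T i ` K)"
    and "closed A" "A \<noteq> {}" and A: "\<And>i. i \<in> I \<Longrightarrow> T i ` A \<subseteq> A"
    and T: "\<And>i x y. i \<in> I \<Longrightarrow> dist (T i x) (T i y) \<le> \<rho> i * dist x y"
    and \<rho>: "\<And>i. i \<in> I \<Longrightarrow> 0 \<le> \<rho> i \<and> \<rho> i < 1"
  shows "K \<subseteq> A"
proof (cases "K = {}")
  case False
  obtain x where "x \<in> K" and x_max: "\<And>y. y \<in> K \<Longrightarrow> infdist y A \<le> infdist x A"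
    using continuous_attains_sup[OF \<open>compact K\<close> False
        continuous_on_infdist[OF continuous_on_id, of K A]]
    by blast
  then obtain i y where i: "i \<in> I" and "y \<in> K" and xy: "x = T i y" using K by blast
  obtain z where "z \<in> A" and z: "infdist y A = dist y z"
    using infdist_attains_inf[OF \<open>closed A\<close> \<open>A \<noteq> {}\<close>] by blast
  have "infdist x A \<le> dist x (T i z)" using A[OF i] \<open>z \<in> A\<close> by (intro infdist_le) auto
  also have "\<dots> \<le> \<rho> i * infdist y A" using T[OF i] xy z by simp
  also have "\<dots> \<le> \<rho> i * infdist x A" using x_max[OF \<open>y \<in> K\<close>] \<rho>[OF i] by (simp add: mult_left_mono)
  finally have "(1 - \<rho> i) * infdist x A \<le> 0" by (simp add: algebra_simps)
  then have "infdist x A \<le> 0" using \<rho>[OF i] by (simp add: mult_le_0_iff)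
  then show ?thesis
    using x_max infdist_nonneg in_closed_iff_infdist_zero[OF \<open>closed A\<close> \<open>A \<noteq> {}\<close>]
    by (meson antisym order_trans subsetI)
qed simp

lemma quasisymmetric_on_inverse_bound:
  assumes "quasisymmetric_on A f"
  obtains \<delta> where "\<delta> > 0"
    "\<And>x y z. x \<in> A \<Longrightarrow> y \<in> A \<Longrightarrow> z \<in> A \<Longrightarrow> dist (f x) (f z) \<le> dist (f x) (f y) \<Longrightarrow>
       \<delta> * dist x z \<le> dist x y"
proof -
  obtain \<eta> :: "real \<Rightarrow> real" where hom: "homeomorphism {0..} {0..} \<eta> (inv_into {0..} \<eta>)"
    and mono: "strict_mono_on {0..} \<eta>"
    and qs: "\<And>x y z t. x \<in> A \<Longrightarrow> y \<in> A \<Longrightarrow> z \<in> A \<Longrightarrow> t \<ge> 0 \<Longrightarrow> dist x y \<le> t * dist x z \<Longrightarrow>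
            dist (f x) (f y) \<le> \<eta> t * dist (f x) (f z)"
    and "inj_on f A"
    using assms unfolding quasisymmetric_on_def by blast
  have "\<eta> ` {0..} = {0..}" using hom unfolding homeomorphism_def by blast
  then have "1 \<in> \<eta> ` {0..}" "0 \<in> \<eta> ` {0..}" by auto
  then obtain \<delta> t\<^sub>0 where \<delta>: "\<delta> \<ge> 0" "\<eta> \<delta> = 1" and "t\<^sub>0 \<ge> 0" "\<eta> t\<^sub>0 = 0"
    by (auto simp: image_iff)
  have "\<delta> \<noteq> 0"
  proof
    assume "\<delta> = 0"
    moreover have "t\<^sub>0 \<noteq> \<delta>" using \<delta>(2) \<open>\<eta> t\<^sub>0 = 0\<close> by auto
    ultimately have "\<delta> < t\<^sub>0" using \<open>t\<^sub>0 \<ge> 0\<close> by simp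
    then have "\<eta> \<delta> < \<eta> t\<^sub>0" using mono \<delta>(1) \<open>t\<^sub>0 \<ge> 0\<close> by (simp add: strict_mono_onD)
    then show False using \<delta> \<open>\<eta> t\<^sub>0 = 0\<close> by simp
  qed
  with \<delta> have "\<delta> > 0" by simp
  moreover have "\<delta> * dist x z \<le> dist x y"
    if x: "x \<in> A" and y: "y \<in> A" and z: "z \<in> A" and fxz: "dist (f x) (f z) \<le> dist (f x) (f y)"
    for x y z
  proof (cases "x = z")
    case False
    define t where "t = dist x y / dist x z"
    have "t \<ge> 0" "dist x y = t * dist x z" using False unfolding t_def by simp_all
    then have "dist (f x) (f y) \<le> \<eta> t * dist (f x) (f z)" using qs[OF x y z] by simp
    with fxz have "1 * dist (f x) (f z) \<le> \<eta> t * dist (f x) (f z)" by simp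
    moreover have "f x \<noteq> f z" using False \<open>inj_on f A\<close> x z by (meson inj_on_def)
    ultimately have "1 \<le> \<eta> t" by (simp only: mult_le_cancel_right) simp
    have "\<delta> \<le> t"
    proof (rule ccontr)
      assume "\<not> \<delta> \<le> t"
      then have "\<eta> t < \<eta> \<delta>" using mono \<open>t \<ge> 0\<close> \<delta>(1) by (simp add: strict_mono_onD)
      then show False using \<open>1 \<le> \<eta> t\<close> \<delta>(2) by simp
    qed
    then show ?thesis using False unfolding t_def by (simp add: field_simps)
  qed simp
  ultimately show thesis by (rule that)
qed

lemma touching_intervals_between:
  fixes A B :: "real set"
  assumes "is_interval A" "is_interval B" and AB: "A \<inter> B = {z}" and "x \<in> A" "y \<in> B"
  shows "dist x z \<le> dist x y \<and> dist y z \<le> dist x y"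
proof -
  have "z \<in> A" "z \<in> B" using AB by auto
  have False if "z < min x y"
  proof -
    have "min x y \<in> A" "min x y \<in> B"
      using mem_is_interval_1_I[OF assms(1) \<open>z \<in> A\<close> \<open>x \<in> A\<close>]
        mem_is_interval_1_I[OF assms(2) \<open>z \<in> B\<close> \<open>y \<in> B\<close>] that by auto
    then have "min x y = z" using AB by blast
    then show False using that by simp
  qed
  moreover have False if "max x y < z"
  proof -
    have "max x y \<in> A" "max x y \<in> B"
      using mem_is_interval_1_I[OF assms(1) \<open>x \<in> A\<close> \<open>z \<in> A\<close>]
        mem_is_interval_1_I[OF assms(2) \<open>y \<in> B\<close> \<open>z \<in> B\<close>] that by auto
    then have "max x y = z" using AB by blast
    then show False using that by simp
  qed
  ultimately have "min x y \<le> z \<and> z \<le> max x y" by (meson not_less)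
  then show ?thesis unfolding dist_real_def by linarith
qed

lemma self_similar_power_bounds:
  fixes F :: "real \<Rightarrow> real"
  assumes "0 < q" "q < 1" and "F 0 = 0"
    and scale: "\<And>y. y \<in> {0..1} \<Longrightarrow> F (q * y) = q powr \<alpha> * F y"
    and base: "\<And>x. x \<in> {q..1} \<Longrightarrow> A * x powr \<alpha> \<le> F x \<and> F x \<le> B * x powr \<alpha>"
    and x: "x \<in> {0..1}"
  shows "A * x powr \<alpha> \<le> F x \<and> F x \<le> B * x powr \<alpha>"
proof (cases "x = 0")
  case False
  have "A * x powr \<alpha> \<le> F x \<and> F x \<le> B * x powr \<alpha>" if "x \<in> {q ^ k..1}" for k x
    using that
  proof (induction k arbitrary: x)
    case 0 then show ?case using base[of x] \<open>q < 1\<close> by auto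
  next
    case (Suc k)
    show ?case
    proof (cases "q \<le> x")
      case False
      define y where "y = x / q"
      have "y \<in> {q ^ k..1}" using Suc.prems False \<open>0 < q\<close> unfolding y_def by (auto simp: field_simps)
      then have IH: "A * y powr \<alpha> \<le> F y \<and> F y \<le> B * y powr \<alpha>" by (rule Suc.IH)
      have "y \<in> {0..1}" using \<open>y \<in> {q ^ k..1}\<close> \<open>0 < q\<close> by (auto intro: order_trans[rotated])
      have x_eq: "x = q * y" using \<open>0 < q\<close> unfolding y_def by simp
      then have "x powr \<alpha> = q powr \<alpha> * y powr \<alpha>" using \<open>0 < q\<close> \<open>y \<in> {0..1}\<close> by (simp add: powr_mult)
      then have "A * x powr \<alpha> = q powr \<alpha> * (A * y powr \<alpha>)" "B * x powr \<alpha> = q powr \<alpha> * (B * y powr \<alpha>)"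
        by simp_all
      moreover have "F x = q powr \<alpha> * F y" unfolding x_eq using \<open>y \<in> {0..1}\<close> by (rule scale)
      ultimately show ?thesis using IH by (simp only:) (simp add: mult_left_mono)
    qed (use Suc.prems base in auto)
  qed
  moreover obtain k where "q ^ k < x"
    using real_arch_pow_inv[of x q] x False \<open>q < 1\<close> by auto
  ultimately show ?thesis using x by (meson atLeastAtMost_iff less_imp_le)
qed (use \<open>F 0 = 0\<close> in simp)

definition snowflake_parametrization :: "real \<Rightarrow> (real \<Rightarrow> 'a::metric_space) \<Rightarrow> 'a set \<Rightarrow> bool" where
  "snowflake_parametrization \<alpha> f A \<longleftrightarrow> f ` {0..1} = A \<and>
     (\<exists>c C. 0 < c \<and> 0 < C \<and> (\<forall>t\<in>{0..1}. \<forall>u\<in>{0..1}.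
        c * \<bar>t - u\<bar> powr \<alpha> \<le> dist (f t) (f u) \<and> dist (f t) (f u) \<le> C * \<bar>t - u\<bar> powr \<alpha>))"

lemma bi_lipschitz_equivalent_if_snowflake_parametrizations:
  assumes "snowflake_parametrization \<alpha> f A" and "snowflake_parametrization \<alpha> g B"
  shows "bi_lipschitz_equivalent A B"
proof -
  obtain c\<^sub>1 C\<^sub>1 where A: "f ` {0..1} = A" and "0 < c\<^sub>1" "0 < C\<^sub>1"
    and f: "\<And>t u. t \<in> {0..1} \<Longrightarrow> u \<in> {0..1} \<Longrightarrow>
      c\<^sub>1 * \<bar>t - u\<bar> powr \<alpha> \<le> dist (f t) (f u) \<and> dist (f t) (f u) \<le> C\<^sub>1 * \<bar>t - u\<bar> powr \<alpha>"
    using assms(1) unfolding snowflake_parametrization_def by blast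
  obtain c\<^sub>2 C\<^sub>2 where B: "g ` {0..1} = B" and "0 < c\<^sub>2" "0 < C\<^sub>2"
    and g: "\<And>t u. t \<in> {0..1} \<Longrightarrow> u \<in> {0..1} \<Longrightarrow>
      c\<^sub>2 * \<bar>t - u\<bar> powr \<alpha> \<le> dist (g t) (g u) \<and> dist (g t) (g u) \<le> C\<^sub>2 * \<bar>t - u\<bar> powr \<alpha>"
    using assms(2) unfolding snowflake_parametrization_def by blast
  have "inj_on f {0..1}"
  proof (rule inj_onI)
    fix t u assume "t \<in> {0..1}" "u \<in> {0..1}" "f t = f u"
    then have "c\<^sub>1 * \<bar>t - u\<bar> powr \<alpha> \<le> 0" using f by fastforce
    then show "t = u" using \<open>0 < c\<^sub>1\<close> by (simp add: mult_le_0_iff)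
  qed
  define h where "h = g \<circ> inv_into {0..1} f"
  have h: "h (f t) = g t" if "t \<in> {0..1}" for t
    unfolding h_def using inv_into_f_f[OF \<open>inj_on f {0..1}\<close> that] by simp
  define C where "C = max (C\<^sub>2 / c\<^sub>1) (C\<^sub>1 / c\<^sub>2)"
  have C: "C\<^sub>2 / c\<^sub>1 \<le> C" "C\<^sub>1 / c\<^sub>2 \<le> C" unfolding C_def by simp_all
  then have "C > 0" using \<open>0 < c\<^sub>1\<close> \<open>0 < C\<^sub>2\<close> by (smt (verit) divide_pos_pos)
  have "h ` A = B" unfolding A[symmetric] B[symmetric] image_image using h by simp
  moreover have "dist x y / C \<le> dist (h x) (h y) \<and> dist (h x) (h y) \<le> C * dist x y"
    if xy: "x \<in> A" "y \<in> A" for x y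
  proof -
    obtain t u where t: "t \<in> {0..1}" "x = f t" and u: "u \<in> {0..1}" "y = f u"
      using xy unfolding A[symmetric] by blast
    let ?d = "\<bar>t - u\<bar> powr \<alpha>"
    have "dist (h x) (h y) \<le> C\<^sub>2 * ?d" using g[OF t(1) u(1)] h t u by simp
    also have "\<dots> = C\<^sub>2 / c\<^sub>1 * (c\<^sub>1 * ?d)" using \<open>0 < c\<^sub>1\<close> by simp
    also have "\<dots> \<le> C * dist x y"
      using f[OF t(1) u(1)] t u \<open>0 < c\<^sub>1\<close> \<open>0 < C\<^sub>2\<close> C(1) \<open>C > 0\<close> by (intro mult_mono) auto
    finally have upper: "dist (h x) (h y) \<le> C * dist x y" .
    have "dist x y / C \<le> dist x y / (C\<^sub>1 / c\<^sub>2)"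
      using \<open>0 < c\<^sub>2\<close> \<open>0 < C\<^sub>1\<close> C(2) \<open>C > 0\<close> by (intro divide_left_mono) auto
    also have "\<dots> \<le> c\<^sub>2 / C\<^sub>1 * (C\<^sub>1 * ?d)"
      using f[OF t(1) u(1)] t u \<open>0 < c\<^sub>2\<close> \<open>0 < C\<^sub>1\<close> by (simp add: field_simps)
    also have "\<dots> \<le> dist (h x) (h y)" using g[OF t(1) u(1)] h t u \<open>0 < C\<^sub>1\<close> by simp
    finally show ?thesis using upper by simp
  qed
  ultimately show ?thesis unfolding bi_lipschitz_equivalent_def using \<open>C > 0\<close> by blast
qed

locale IFS_quasiarc_setting =
  fixes N :: nat and S :: "nat \<Rightarrow> 'a::euclidean_space \<Rightarrow> 'a" and r :: "nat \<Rightarrow> real"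
    and \<gamma> :: "'a set" and s :: real and a b :: 'a
  assumes N_ge_2: "N \<ge> 2"
    and r_pos: "\<And>i. i \<in> {1..N} \<Longrightarrow> 0 < r i" and r_lt_1: "\<And>i. i \<in> {1..N} \<Longrightarrow> r i < 1"
    and similarity: "\<And>i. i \<in> {1..N} \<Longrightarrow> similarity_with_ratio (S i) (r i)"
    and compact: "compact \<gamma>" and nonempty: "\<gamma> \<noteq> {}"
    and invariant: "\<gamma> = (\<Union>i\<in>{1..N}. S i ` \<gamma>)"
    and s_pos: "s > 0" and moran: "(\<Sum>i=1..N. r i powr s) = 1"
    and fixed_a: "S 1 a = a" and fixed_b: "S N b = b"
    and junction: "\<And>i. i \<in> {1..<N} \<Longrightarrow> S i b = S (i + 1) a"
    and adjacent_pieces: "\<And>i. i \<in> {1..<N} \<Longrightarrow> S i ` \<gamma> \<inter> S (i + 1) ` \<gamma> = {S (i + 1) a}"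
    and distant_pieces: "\<And>i j. i \<in> {1..N} \<Longrightarrow> j \<in> {1..N} \<Longrightarrow> \<bar>int i - int j\<bar> > 1 \<Longrightarrow>
      S i ` \<gamma> \<inter> S j ` \<gamma> = {}"
    and quasisymmetric: "quasisymmetrically_equivalent \<gamma> {0..1::real}"
begin

lemma one_in: "1 \<in> {1..N}" and N_in: "N \<in> {1..N}"
  using N_ge_2 by auto

lemma dist_S: "i \<in> {1..N} \<Longrightarrow> dist (S i x) (S i y) = r i * dist x y"
  using similarity by (simp add: similarity_with_ratio_def)

lemma continuous_on_S: "i \<in> {1..N} \<Longrightarrow> continuous_on A (S i)"
  using similarity r_pos by (meson less_imp_le similarity_with_ratio_continuous_on)

lemma inj_S: "i \<in> {1..N} \<Longrightarrow> inj (S i)"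
  using dist_S r_pos by (intro injI) (metis dist_eq_0_iff mult_eq_0_iff order_less_irrefl)

lemma S_subset: "i \<in> {1..N} \<Longrightarrow> S i ` \<gamma> \<subseteq> \<gamma>"
  using invariant by blast

lemma compact_S: "i \<in> {1..N} \<Longrightarrow> compact (S i ` \<gamma>)"
  using compact_continuous_image[OF continuous_on_S compact] .

lemma closed_pieces: "K \<subseteq> {1..N} \<Longrightarrow> closed (\<Union>k\<in>K. S k ` \<gamma>)"
  using compact_S finite_subset[of K "{1..N}"] by (intro closed_UN ballI compact_imp_closed) auto

lemma distant_pieces_disjoint: "i \<in> {1..N} \<Longrightarrow> j \<in> {1..N} \<Longrightarrow> i + 2 \<le> j \<Longrightarrow> S i ` \<gamma> \<inter> S j ` \<gamma> = {}"
  by (intro distant_pieces) auto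

lemma fixed_point_in:
  assumes "i \<in> {1..N}" "S i x = x" shows "x \<in> \<gamma>"
proof -
  have "{x} \<subseteq> \<gamma>"
    by (rule subset_closed_if_contractions_invariant[where I = "{i}" and T = S and \<rho> = r])
      (use assms S_subset dist_S r_pos r_lt_1 compact_imp_closed[OF compact] nonempty in
        \<open>auto intro: less_imp_le\<close>)
  then show ?thesis by simp
qed

lemma a_in: "a \<in> \<gamma>" and b_in: "b \<in> \<gamma>"
  using fixed_point_in[OF one_in fixed_a] fixed_point_in[OF N_in fixed_b] .

subsection \<open>The partition of the parameter interval\<close>

definition w :: "nat \<Rightarrow> real" where "w i = r i powr s"

definition cw :: "nat \<Rightarrow> real" where "cw j = (\<Sum>l=1..j. w l)"

definition \<tau> :: "nat \<Rightarrow> real \<Rightarrow> real" where "\<tau> i x = cw (i - 1) + w i * x"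

lemma w_pos: "i \<in> {1..N} \<Longrightarrow> 0 < w i"
  unfolding w_def using r_pos[of i] by simp

lemma w_lt_1: "i \<in> {1..N} \<Longrightarrow> w i < 1"
  unfolding w_def using r_pos r_lt_1 s_pos powr01_less_one by blast

lemma mult_w_powr: "i \<in> {1..N} \<Longrightarrow> 0 \<le> z \<Longrightarrow> (w i * z) powr (1/s) = r i * z powr (1/s)"
  unfolding w_def using r_pos[of i] s_pos by (simp add: powr_mult powr_powr)

lemma powr_s_le_1: "z \<in> {0..1} \<Longrightarrow> z powr (1/s) \<le> 1"
  using powr_mono2[of "1/s" z 1] s_pos by simp

lemma powr_s_mono: "0 \<le> x \<Longrightarrow> x \<le> y \<Longrightarrow> x powr (1/s) \<le> y powr (1/s)"
  using s_pos by (intro powr_mono2) auto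

lemma cw_0 [simp]: "cw 0 = 0"
  unfolding cw_def by simp

lemma cw_N: "cw N = 1"
  unfolding cw_def w_def using moran by simp

lemma cw_Suc: "cw (Suc j) = cw j + w (Suc j)"
  unfolding cw_def by simp

lemma cw_pred: "i \<in> {1..N} \<Longrightarrow> cw i = cw (i - 1) + w i"
  using cw_Suc[of "i - 1"] by simp

lemma cw_mono: "i \<le> j \<Longrightarrow> j \<le> N \<Longrightarrow> cw i \<le> cw j"
proof (induction j)
  case (Suc j)
  then show ?case using cw_Suc[of j] w_pos[of "Suc j"] by (cases "i = Suc j") auto
qed simp

lemma cw_strict_mono:
  assumes "i < j" "j \<le> N" shows "cw i < cw j"
proof -
  have "cw i \<le> cw (j - 1)" using assms by (intro cw_mono) auto
  moreover have "cw j = cw (j - 1) + w j" "0 < w j" using assms cw_pred w_pos by auto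
  ultimately show ?thesis by simp
qed

lemma cw_nonneg: "0 \<le> cw j"
  unfolding cw_def w_def by (simp add: sum_nonneg)

lemma cw_le_1: "j \<le> N \<Longrightarrow> cw j \<le> 1"
  using cw_mono[of j N] cw_N by simp

lemma cw_interval_unit: "i \<in> {1..N} \<Longrightarrow> t \<in> {cw (i - 1)..cw i} \<Longrightarrow> t \<in> {0..1}"
  using cw_nonneg[of "i - 1"] cw_le_1[of i] by auto

lemma cw_N_pred: "cw (N - 1) + w N = 1"
  using cw_pred[of N] cw_N N_ge_2 by simp

definition w_min :: real where "w_min = Min (w ` {1..N})"

definition w_max :: real where "w_max = Max (w ` {1..N})"

lemma w_min: "0 < w_min" "\<And>i. i \<in> {1..N} \<Longrightarrow> w_min \<le> w i"
proof -
  have "w_min \<in> w ` {1..N}" unfolding w_min_def using N_ge_2 by (intro Min_in) auto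
  then show "0 < w_min" using w_pos by auto
  show "\<And>i. i \<in> {1..N} \<Longrightarrow> w_min \<le> w i" unfolding w_min_def by (intro Min_le) auto
qed

lemma w_max: "0 < w_max" "w_max < 1" "\<And>i. i \<in> {1..N} \<Longrightarrow> w i \<le> w_max"
proof -
  have "w_max \<in> w ` {1..N}" unfolding w_max_def using N_ge_2 by (intro Max_in) auto
  then show "0 < w_max" "w_max < 1" using w_pos w_lt_1 by auto
  show "\<And>i. i \<in> {1..N} \<Longrightarrow> w i \<le> w_max" unfolding w_max_def by (intro Max_ge) auto
qed

lemma \<tau>_0: "\<tau> i 0 = cw (i - 1)" and \<tau>_1: "i \<in> {1..N} \<Longrightarrow> \<tau> i 1 = cw i"
  unfolding \<tau>_def using cw_pred by auto

lemma \<tau>_diff: "\<tau> i y - \<tau> i x = w i * (y - x)"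
  unfolding \<tau>_def by (simp add: algebra_simps)

lemma \<tau>_diff_powr: "i \<in> {1..N} \<Longrightarrow> x \<le> y \<Longrightarrow> (\<tau> i y - \<tau> i x) powr (1/s) = r i * (y - x) powr (1/s)"
  using mult_w_powr[of i "y - x"] by (simp add: \<tau>_diff)

lemma \<tau>_in: "i \<in> {1..N} \<Longrightarrow> x \<in> {0..1} \<Longrightarrow> \<tau> i x \<in> {cw (i - 1)..cw i}"
  unfolding \<tau>_def using cw_pred[of i] w_pos[of i] by (auto intro: mult_left_le)

lemma \<tau>_in_unit: "i \<in> {1..N} \<Longrightarrow> x \<in> {0..1} \<Longrightarrow> \<tau> i x \<in> {0..1}"
  using \<tau>_in cw_interval_unit by blast

lemma \<tau>_inverse:
  assumes "i \<in> {1..N}" "t \<in> {cw (i - 1)..cw i}"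
  obtains x where "x \<in> {0..1}" "t = \<tau> i x"
proof
  show "(t - cw (i - 1)) / w i \<in> {0..1}"
    using assms cw_pred[OF assms(1)] w_pos[OF assms(1)] by (auto simp: field_simps)
  show "t = \<tau> i ((t - cw (i - 1)) / w i)"
    unfolding \<tau>_def using w_pos[OF assms(1)] by simp
qed

lemma cw_intervals_cover:
  "m < n \<Longrightarrow> n \<le> N \<Longrightarrow> t \<in> {cw m..cw n} \<Longrightarrow> \<exists>k\<in>{Suc m..n}. t \<in> {cw (k - 1)..cw k}"
proof (induction n)
  case (Suc n)
  show ?case
  proof (cases "t \<le> cw n \<and> m < n")
    case True
    then show ?thesis using Suc by force
  next
    case False
    have "cw n \<le> t"
    proof (cases "m < n")
      case False
      then have "m = n" using Suc.prems(1) by simp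
      then show ?thesis using Suc.prems(3) by simp
    qed (use \<open>\<not> (t \<le> cw n \<and> m < n)\<close> in simp)
    then have "t \<in> {cw (Suc n - 1)..cw (Suc n)}" using Suc.prems by auto
    moreover have "Suc n \<in> {Suc m..Suc n}" using Suc.prems by simp
    ultimately show ?thesis by blast
  qed
qed simp

definition piece :: "real \<Rightarrow> nat" where "piece t = (LEAST i. 1 \<le> i \<and> t \<le> cw i)"

lemma piece:
  assumes "t \<in> {0..1}"
  shows "piece t \<in> {1..N}" "t \<in> {cw (piece t - 1)..cw (piece t)}"
proof -
  let ?P = "\<lambda>i. 1 \<le> i \<and> t \<le> cw i"
  have "?P N" using assms N_ge_2 cw_N by auto
  then have P: "?P (piece t)" and "piece t \<le> N"
    unfolding piece_def by (rule LeastI, rule Least_le)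
  then show "piece t \<in> {1..N}" by simp
  have "cw (piece t - 1) \<le> t"
  proof (cases "piece t = 1")
    case False
    then have "\<not> ?P (piece t - 1)" using P unfolding piece_def by (intro not_less_Least) auto
    then show ?thesis using False P by auto
  qed (use assms in simp)
  then show "t \<in> {cw (piece t - 1)..cw (piece t)}" using P by simp
qed

lemma piece_eqI:
  assumes i: "i \<in> {1..N}" and "t \<le> cw i" and "i = 1 \<or> cw (i - 1) < t"
  shows "piece t = i"
  unfolding piece_def
proof (rule Least_equality)
  fix j assume j: "1 \<le> j \<and> t \<le> cw j"
  show "i \<le> j"
  proof (rule ccontr)
    assume "\<not> i \<le> j"
    then have "cw j \<le> cw (i - 1)" using i by (intro cw_mono) auto
    then show False using j assms \<open>\<not> i \<le> j\<close> by auto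
  qed
qed (use assms in auto)

subsection \<open>The parametrization as a limit of refinements\<close>

definition refine :: "(real \<Rightarrow> 'a) \<Rightarrow> real \<Rightarrow> 'a" where
  "refine g t = S (piece t) (g ((t - cw (piece t - 1)) / w (piece t)))"

lemma refine_cases:
  assumes "t \<in> {0..1}"
  shows "\<exists>i\<in>{1..N}. \<exists>x\<in>{0..1}. \<forall>g. refine g t = S i (g x)"
proof (intro bexI allI)
  show "piece t \<in> {1..N}" using piece[OF assms] by simp
  then show "(t - cw (piece t - 1)) / w (piece t) \<in> {0..1}"
    using piece[OF assms] cw_pred w_pos by (auto simp: field_simps)
qed (simp add: refine_def)

lemma refine_\<tau>:
  assumes "g 0 = a" "g 1 = b" and i: "i \<in> {1..N}" and x: "x \<in> {0..1}"
  shows "refine g (\<tau> i x) = S i (g x)"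
proof (cases "x = 0 \<and> i \<noteq> 1")
  case True
  then have i': "i - 1 \<in> {1..N}" and "Suc (i - 1) = i" using i by auto
  have "cw (i - 1 - 1) < cw (i - 1)" using i' by (intro cw_strict_mono) auto
  then have "piece (\<tau> i 0) = i - 1" by (intro piece_eqI[OF i']) (auto simp: \<tau>_0)
  moreover have "\<tau> i 0 = cw (i - 1 - 1) + w (i - 1)" using cw_pred[OF i'] by (simp add: \<tau>_0)
  ultimately have "refine g (\<tau> i 0) = S (i - 1) b"
    unfolding refine_def using w_pos[OF i'] assms(2) by simp
  also have "\<dots> = S i a" using junction[of "i - 1"] True i \<open>Suc (i - 1) = i\<close> by simp
  finally show ?thesis using True assms(1) by simp
next
  case False
  have "piece (\<tau> i x) = i"
    using False \<tau>_in[OF i x] w_pos[OF i] x by (intro piece_eqI[OF i]) (auto simp: \<tau>_def)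
  then show ?thesis unfolding refine_def \<tau>_def using w_pos[OF i] by simp
qed

definition approx :: "nat \<Rightarrow> real \<Rightarrow> 'a" where
  "approx k = (refine ^^ k) (\<lambda>t. if t < 1 then a else b)"

lemma approx_Suc: "approx (Suc k) = refine (approx k)"
  unfolding approx_def by simp

lemma approx_endpoints: "approx k 0 = a \<and> approx k 1 = b"
proof (induction k)
  case (Suc k)
  have "refine (approx k) (\<tau> 1 0) = a" "refine (approx k) (\<tau> N 1) = b"
    using Suc refine_\<tau> one_in N_in fixed_a fixed_b by auto
  then show ?case using \<tau>_1[OF N_in] cw_N by (simp add: approx_Suc \<tau>_0)
qed (simp add: approx_def)

lemma approx_in: "t \<in> {0..1} \<Longrightarrow> approx k t \<in> \<gamma>"
proof (induction k arbitrary: t)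
  case 0
  then show ?case using a_in b_in by (simp add: approx_def)
next
  case (Suc k)
  obtain i x where i: "i \<in> {1..N}" and x: "x \<in> {0..1}" and "\<And>g. refine g t = S i (g x)"
    using refine_cases[OF Suc.prems] by blast
  then show ?case using Suc.IH[OF x] S_subset[OF i] by (auto simp: approx_Suc)
qed

definition r_max :: real where "r_max = Max (r ` {1..N})"

lemma r_max: "0 \<le> r_max" "r_max < 1" "\<And>i. i \<in> {1..N} \<Longrightarrow> r i \<le> r_max"
proof -
  have "r_max \<in> r ` {1..N}" unfolding r_max_def using N_ge_2 by (intro Max_in) auto
  then show "0 \<le> r_max" "r_max < 1" using r_pos r_lt_1 by (auto intro: less_imp_le)
  show "\<And>i. i \<in> {1..N} \<Longrightarrow> r i \<le> r_max" unfolding r_max_def by (intro Max_ge) auto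
qed

lemma dist_le_diameter: "x \<in> \<gamma> \<Longrightarrow> y \<in> \<gamma> \<Longrightarrow> dist x y \<le> diameter \<gamma>"
  using compact compact_imp_bounded diameter_bounded_bound by blast

lemma dist_approx_Suc: "t \<in> {0..1} \<Longrightarrow> dist (approx (Suc k) t) (approx k t) \<le> r_max ^ k * diameter \<gamma>"
proof (induction k arbitrary: t)
  case 0
  then show ?case using dist_le_diameter approx_in by simp
next
  case (Suc k)
  obtain i x where i: "i \<in> {1..N}" and x: "x \<in> {0..1}" and "\<And>g. refine g t = S i (g x)"
    using refine_cases[OF Suc.prems] by blast
  then have "dist (approx (Suc (Suc k)) t) (approx (Suc k) t) = r i * dist (approx (Suc k) x) (approx k x)"
    using dist_S[OF i] by (simp add: approx_Suc)
  also have "\<dots> \<le> r_max * (r_max ^ k * diameter \<gamma>)"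
    using Suc.IH[OF x] r_max(1) r_max(3)[OF i] by (intro mult_mono) auto
  finally show ?case by simp
qed

definition param :: "real \<Rightarrow> 'a" where "param t = lim (\<lambda>k. approx k t)"

lemma approx_tendsto: assumes "t \<in> {0..1}" shows "(\<lambda>k. approx k t) \<longlonglongrightarrow> param t"
proof -
  have "summable (\<lambda>k. r_max ^ k * diameter \<gamma>)"
    using r_max by (intro summable_mult2 summable_geometric) simp
  moreover have "norm (approx (Suc k) t - approx k t) \<le> r_max ^ k * diameter \<gamma>" for k
    using dist_approx_Suc[OF assms] by (simp add: dist_norm)
  ultimately have "summable (\<lambda>k. approx (Suc k) t - approx k t)"
    by (rule summable_comparison_test')
  then have "convergent (\<lambda>k. approx 0 t + (\<Sum>j<k. approx (Suc j) t - approx j t))"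
    by (intro convergent_add convergent_const) (simp add: summable_iff_convergent)
  moreover have "approx 0 t + (\<Sum>j<k. approx (Suc j) t - approx j t) = approx k t" for k
    by (simp only: sum_lessThan_telescope[of "\<lambda>j. approx j t"]) simp
  ultimately have "convergent (\<lambda>k. approx k t)" by simp
  then show ?thesis unfolding param_def by (simp add: convergent_LIMSEQ_iff)
qed

lemma param_in: "t \<in> {0..1} \<Longrightarrow> param t \<in> \<gamma>"
  using closed_sequentially[OF compact_imp_closed[OF compact] _ approx_tendsto] approx_in by blast

lemma param_0: "param 0 = a" and param_1: "param 1 = b"
  using approx_tendsto[of 0] approx_tendsto[of 1] approx_endpoints by (simp_all add: LIMSEQ_const_iff)

lemma param_\<tau>:
  assumes i: "i \<in> {1..N}" and x: "x \<in> {0..1}"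
  shows "param (\<tau> i x) = S i (param x)"
proof -
  have "(\<lambda>k. approx (Suc k) (\<tau> i x)) \<longlonglongrightarrow> param (\<tau> i x)"
    using approx_tendsto[OF \<tau>_in_unit[OF i x]] by (rule LIMSEQ_Suc)
  moreover have "approx (Suc k) (\<tau> i x) = S i (approx k x)" for k
    using refine_\<tau>[OF _ _ i x] approx_endpoints by (simp add: approx_Suc)
  moreover have "isCont (S i) (param x)"
    using continuous_on_S[OF i, of UNIV] by (simp add: continuous_on_eq_continuous_at)
  then have "(\<lambda>k. S i (approx k x)) \<longlonglongrightarrow> S i (param x)"
    using approx_tendsto[OF x] by (rule isCont_tendsto_compose)
  ultimately show ?thesis using LIMSEQ_unique by auto
qed

lemma dist_param_\<tau>:
  "i \<in> {1..N} \<Longrightarrow> x \<in> {0..1} \<Longrightarrow> y \<in> {0..1} \<Longrightarrow>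
    dist (param (\<tau> i x)) (param (\<tau> i y)) = r i * dist (param x) (param y)"
  using param_\<tau> dist_S by simp

lemma param_piece:
  assumes "i \<in> {1..N}" "t \<in> {cw (i - 1)..cw i}" shows "param t \<in> S i ` \<gamma>"
proof -
  obtain x where "x \<in> {0..1}" "t = \<tau> i x" using \<tau>_inverse[OF assms] .
  then show ?thesis using param_\<tau>[OF assms(1)] param_in by auto
qed

subsection \<open>Behaviour near the endpoints\<close>

lemma gamma_not_singleton: "\<exists>x\<in>\<gamma>. \<exists>y\<in>\<gamma>. x \<noteq> y"
proof -
  obtain h g where "homeomorphism \<gamma> {0..1::real} h g"
    using quasisymmetric unfolding quasisymmetrically_equivalent_def by blast
  then have "g 0 \<in> \<gamma>" "g 1 \<in> \<gamma>" "h (g 0) = 0" "h (g 1) = 1"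
    unfolding homeomorphism_def by auto
  then show ?thesis by (metis zero_neq_one)
qed

lemma a_ne_b: "a \<noteq> b"
proof
  assume "a = b"
  \<comment> \<open>then a is fixed by every \<open>S i\<close>, so \<open>{a}\<close> is invariant and contains the attractor\<close>
  have fixed: "S i a = a" if "i \<in> {1..N}" for i
    using that
  proof (induction i)
    case (Suc i)
    show ?case
    proof (cases "i = 0")
      case False
      then have "i \<in> {1..<N}" "i \<in> {1..N}" using Suc.prems by auto
      then show ?thesis using junction[of i] Suc.IH \<open>a = b\<close> by simp
    qed (use fixed_a in simp)
  qed simp
  have "\<gamma> \<subseteq> {a}"
  proof (rule subset_closed_if_contractions_invariant[where I = "{1..N}" and T = S and \<rho> = r])
    show "compact \<gamma>" "\<gamma> \<subseteq> (\<Union>i\<in>{1..N}. S i ` \<gamma>)" "closed {a}" "{a} \<noteq> {}"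
      using compact invariant by auto
    fix i assume i: "i \<in> {1..N}"
    show "S i ` {a} \<subseteq> {a}" using fixed[OF i] by simp
    show "dist (S i x) (S i y) \<le> r i * dist x y" for x y using dist_S[OF i] by simp
    show "0 \<le> r i \<and> r i < 1" using r_pos[OF i] r_lt_1[OF i] by simp
  qed
  then show False using gamma_not_singleton by blast
qed

lemma a_notin_later_pieces: "k \<in> {2..N} \<Longrightarrow> a \<notin> S k ` \<gamma>"
proof
  assume k: "k \<in> {2..N}" and "a \<in> S k ` \<gamma>"
  moreover have "a \<in> S 1 ` \<gamma>" using a_in fixed_a by (metis imageI)
  ultimately have a: "a \<in> S 1 ` \<gamma> \<inter> S k ` \<gamma>" by blast
  show False
  proof (cases "k = 1 + 1")
    case True
    then have "S 1 ` \<gamma> \<inter> S k ` \<gamma> = {S 1 b}"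
      using adjacent_pieces[of 1] junction[of 1] N_ge_2 by simp
    then have "S 1 a = S 1 b" using a fixed_a by simp
    then show False using a_ne_b inj_S[OF one_in] by (simp add: inj_eq)
  next
    case False
    then have "S 1 ` \<gamma> \<inter> S k ` \<gamma> = {}" using k one_in by (intro distant_pieces) auto
    then show False using a by blast
  qed
qed

lemma b_notin_earlier_pieces: "k \<in> {1..<N} \<Longrightarrow> b \<notin> S k ` \<gamma>"
proof
  assume k: "k \<in> {1..<N}" and "b \<in> S k ` \<gamma>"
  moreover have "b \<in> S N ` \<gamma>" using b_in fixed_b by (metis imageI)
  ultimately have b: "b \<in> S k ` \<gamma> \<inter> S N ` \<gamma>" by blast
  show False
  proof (cases "k + 1 = N")
    case True
    then have "S k ` \<gamma> \<inter> S N ` \<gamma> = {S N a}" using adjacent_pieces[OF k] by simp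
    then have "S N b = S N a" using b fixed_b by simp
    then show False using a_ne_b inj_S[OF N_in] by (simp add: inj_eq)
  next
    case False
    then have "S k ` \<gamma> \<inter> S N ` \<gamma> = {}" using k N_in by (intro distant_pieces) auto
    then show False using b by blast
  qed
qed

definition end_gap :: real where
  "end_gap = min (infdist a (\<Union>k\<in>{2..N}. S k ` \<gamma>)) (infdist b (\<Union>k\<in>{1..<N}. S k ` \<gamma>))"

lemma end_gap_pos: "0 < end_gap"
proof -
  have "0 < infdist a (\<Union>k\<in>{2..N}. S k ` \<gamma>)"
  proof (rule infdist_pos_not_in_closed)
    show "closed (\<Union>k\<in>{2..N}. S k ` \<gamma>)" by (rule closed_pieces) auto
    show "(\<Union>k\<in>{2..N}. S k ` \<gamma>) \<noteq> {}" using N_ge_2 nonempty by auto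
    show "a \<notin> (\<Union>k\<in>{2..N}. S k ` \<gamma>)" using a_notin_later_pieces by blast
  qed
  moreover have "0 < infdist b (\<Union>k\<in>{1..<N}. S k ` \<gamma>)"
  proof (rule infdist_pos_not_in_closed)
    show "closed (\<Union>k\<in>{1..<N}. S k ` \<gamma>)" by (rule closed_pieces) auto
    show "(\<Union>k\<in>{1..<N}. S k ` \<gamma>) \<noteq> {}" using N_ge_2 nonempty by auto
    show "b \<notin> (\<Union>k\<in>{1..<N}. S k ` \<gamma>)" using b_notin_earlier_pieces by blast
  qed
  ultimately show ?thesis unfolding end_gap_def by simp
qed

lemma end_gap_le_dist_a: "t \<in> {cw 1..1} \<Longrightarrow> end_gap \<le> dist (param t) a"
proof -
  assume "t \<in> {cw 1..1}"
  then have "\<exists>k\<in>{Suc 1..N}. t \<in> {cw (k - 1)..cw k}"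
    using N_ge_2 cw_N by (intro cw_intervals_cover) auto
  then obtain k where "k \<in> {Suc 1..N}" "t \<in> {cw (k - 1)..cw k}" by blast
  then have "param t \<in> (\<Union>k\<in>{2..N}. S k ` \<gamma>)" using param_piece[of k t] by fastforce
  then have "infdist a (\<Union>k\<in>{2..N}. S k ` \<gamma>) \<le> dist a (param t)" by (rule infdist_le)
  then show ?thesis unfolding end_gap_def by (simp add: dist_commute)
qed

lemma end_gap_le_dist_b: "t \<in> {0..cw (N - 1)} \<Longrightarrow> end_gap \<le> dist (param t) b"
proof -
  assume "t \<in> {0..cw (N - 1)}"
  then have "\<exists>k\<in>{Suc 0..N - 1}. t \<in> {cw (k - 1)..cw k}"
    using N_ge_2 by (intro cw_intervals_cover) auto
  then obtain k where "k \<in> {Suc 0..N - 1}" "t \<in> {cw (k - 1)..cw k}" by blast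
  then have "param t \<in> (\<Union>k\<in>{1..<N}. S k ` \<gamma>)" using param_piece[of k t] N_ge_2 by fastforce
  then have "infdist b (\<Union>k\<in>{1..<N}. S k ` \<gamma>) \<le> dist b (param t)" by (rule infdist_le)
  then show ?thesis unfolding end_gap_def by (simp add: dist_commute)
qed

definition holder_const :: real where "holder_const = diameter \<gamma> / w_min powr (1/s)"

lemma holder_const_nonneg: "0 \<le> holder_const"
  unfolding holder_const_def using w_min(1) diameter_ge_0[OF compact_imp_bounded[OF compact]] by simp

lemma dist_param_le_holder_const:
  assumes "w_min \<le> z" "x \<in> {0..1}" "y \<in> {0..1}"
  shows "dist (param x) (param y) \<le> holder_const * z powr (1/s)"
proof -
  have "w_min powr (1/s) \<le> z powr (1/s)" using assms w_min s_pos by (intro powr_mono2) auto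
  then have "diameter \<gamma> \<le> holder_const * z powr (1/s)"
    unfolding holder_const_def using w_min diameter_ge_0[OF compact_imp_bounded[OF compact]]
    by (simp add: field_simps mult_left_mono)
  then show ?thesis using dist_le_diameter param_in assms(2,3) order_trans by blast
qed

lemma dist_param_a:
  assumes "x \<in> {0..1}"
  shows "end_gap * x powr (1/s) \<le> dist (param x) a \<and> dist (param x) a \<le> holder_const * x powr (1/s)"
proof (rule self_similar_power_bounds[where F = "\<lambda>x. dist (param x) a" and q = "w 1", OF _ _ _ _ _ assms])
  show "0 < w 1" "w 1 < 1" using w_pos w_lt_1 one_in by auto
  show "dist (param 0) a = 0" by (simp add: param_0)
  fix y :: real assume "y \<in> {0..1}"
  have "w 1 * y = \<tau> 1 y" by (simp add: \<tau>_def)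
  moreover have "a = param (\<tau> 1 0)" by (simp add: \<tau>_0 param_0)
  ultimately show "dist (param (w 1 * y)) a = w 1 powr (1/s) * dist (param y) a"
    using dist_param_\<tau>[OF one_in \<open>y \<in> {0..1}\<close>, of 0] mult_w_powr[OF one_in, of 1]
    by (simp add: param_0)
next
  fix x :: real assume x: "x \<in> {w 1..1}"
  then have "x \<in> {cw 1..1}" using cw_pred[OF one_in] by simp
  then have "end_gap \<le> dist (param x) a" by (rule end_gap_le_dist_a)
  moreover have "end_gap * x powr (1/s) \<le> end_gap"
    using powr_s_le_1[of x] end_gap_pos x w_pos[OF one_in] by (simp add: mult_left_le)
  ultimately have "end_gap * x powr (1/s) \<le> dist (param x) a" by linarith
  moreover have "dist (param x) a \<le> holder_const * x powr (1/s)"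
    using dist_param_le_holder_const[of x x 0] x w_min(2)[OF one_in] w_pos[OF one_in] by (simp add: param_0)
  ultimately show "end_gap * x powr (1/s) \<le> dist (param x) a \<and> dist (param x) a \<le> holder_const * x powr (1/s)" ..
qed

lemma dist_param_b:
  assumes "x \<in> {0..1}"
  shows "end_gap * (1 - x) powr (1/s) \<le> dist (param x) b \<and> dist (param x) b \<le> holder_const * (1 - x) powr (1/s)"
proof -
  have "1 - x \<in> {0..1}" using assms by simp
  have "end_gap * z powr (1/s) \<le> dist (param (1 - z)) b \<and> dist (param (1 - z)) b \<le> holder_const * z powr (1/s)"
    if "z \<in> {0..1}" for z
  proof (rule self_similar_power_bounds[where F = "\<lambda>z. dist (param (1 - z)) b" and q = "w N", OF _ _ _ _ _ that])
    show "0 < w N" "w N < 1" using w_pos w_lt_1 N_in by auto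
    show "dist (param (1 - 0)) b = 0" by (simp add: param_1)
    fix y :: real assume y: "y \<in> {0..1}"
    then have "1 - y \<in> {0..1}" by simp
    have "1 - w N * y = \<tau> N (1 - y)" using cw_N_pred by (simp add: \<tau>_def algebra_simps)
    moreover have "b = param (\<tau> N 1)" using \<tau>_1[OF N_in] cw_N by (simp add: param_1)
    ultimately show "dist (param (1 - w N * y)) b = w N powr (1/s) * dist (param (1 - y)) b"
      using dist_param_\<tau>[OF N_in \<open>1 - y \<in> {0..1}\<close>, of 1] mult_w_powr[OF N_in, of 1]
      by (simp add: param_1)
  next
    fix z :: real assume z: "z \<in> {w N..1}"
    then have "1 - z \<in> {0..cw (N - 1)}" using cw_N_pred by simp
    then have "end_gap \<le> dist (param (1 - z)) b" by (rule end_gap_le_dist_b)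
    moreover have "end_gap * z powr (1/s) \<le> end_gap"
      using powr_s_le_1[of z] end_gap_pos z w_pos[OF N_in] by (simp add: mult_left_le)
    moreover have "dist (param (1 - z)) b \<le> holder_const * z powr (1/s)"
      using dist_param_le_holder_const[of z "1 - z" 1] z w_min(2)[OF N_in] w_pos[OF N_in] by (simp add: param_1)
    ultimately show "end_gap * z powr (1/s) \<le> dist (param (1 - z)) b \<and>
        dist (param (1 - z)) b \<le> holder_const * z powr (1/s)" by linarith
  qed
  from this[OF \<open>1 - x \<in> {0..1}\<close>] show ?thesis by simp
qed

lemma dist_param_piece_ends:
  assumes i: "i \<in> {1..N}" and t: "t \<in> {cw (i - 1)..cw i}"
  shows "end_gap * (t - cw (i - 1)) powr (1/s) \<le> dist (param t) (param (cw (i - 1)))"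
    and "dist (param t) (param (cw (i - 1))) \<le> holder_const * (t - cw (i - 1)) powr (1/s)"
    and "end_gap * (cw i - t) powr (1/s) \<le> dist (param t) (param (cw i))"
    and "dist (param t) (param (cw i)) \<le> holder_const * (cw i - t) powr (1/s)"
proof -
  obtain x where x: "x \<in> {0..1}" and tx: "t = \<tau> i x" using \<tau>_inverse[OF i t] .
  have left: "dist (param t) (param (cw (i - 1))) = r i * dist (param x) a"
    using dist_param_\<tau>[OF i x, of 0] tx by (simp add: \<tau>_0 param_0)
  have right: "dist (param t) (param (cw i)) = r i * dist (param x) b"
    using dist_param_\<tau>[OF i x, of 1] tx \<tau>_1[OF i] by (simp add: param_1)
  have "(t - cw (i - 1)) powr (1/s) = r i * x powr (1/s)"
    using mult_w_powr[OF i, of x] x tx by (simp add: \<tau>_def)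
  moreover have "(cw i - t) powr (1/s) = r i * (1 - x) powr (1/s)"
    using mult_w_powr[OF i, of "1 - x"] x tx cw_pred[OF i] by (simp add: \<tau>_def algebra_simps)
  moreover note dist_param_a[OF x] dist_param_b[OF x] r_pos[OF i]
  ultimately show "end_gap * (t - cw (i - 1)) powr (1/s) \<le> dist (param t) (param (cw (i - 1)))"
    and "dist (param t) (param (cw (i - 1))) \<le> holder_const * (t - cw (i - 1)) powr (1/s)"
    and "end_gap * (cw i - t) powr (1/s) \<le> dist (param t) (param (cw i))"
    and "dist (param t) (param (cw i)) \<le> holder_const * (cw i - t) powr (1/s)"
    unfolding left right by (simp_all add: mult.left_commute)
qed

subsection \<open>Bounds for pairs of parameters\<close>

lemma parameter_pair_cases:
  assumes t: "t \<in> {0..1}" and u: "u \<in> {0..1}" and "t < u"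
  obtains (same) i where "i \<in> {1..N}" "t \<in> {cw (i - 1)..cw i}" "u \<in> {cw (i - 1)..cw i}"
  | (adjacent) i where "i \<in> {1..<N}" "t \<in> {cw (i - 1)..cw i}" "u \<in> {cw i..cw (i + 1)}"
  | (distant) i j where "i \<in> {1..N}" "j \<in> {1..N}" "i + 2 \<le> j"
      "t \<in> {cw (i - 1)..cw i}" "u \<in> {cw (j - 1)..cw j}"
proof -
  let ?i = "piece t" and ?j = "piece u"
  note i = piece[OF t] and j = piece[OF u]
  consider "?j < ?i" | "?j = ?i" | "?j = ?i + 1" | "?i + 2 \<le> ?j" by linarith
  then show thesis
  proof cases
    case 1
    then have "cw ?j \<le> cw (?i - 1)" using i by (intro cw_mono) auto
    then show ?thesis using i j \<open>t < u\<close> by auto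
  next
    case 2
    then show ?thesis using i j that(1)[of ?i] by auto
  next
    case 3
    then show ?thesis using i j that(2)[of ?i] by auto
  next
    case 4
    then show ?thesis using i j that(3)[of ?i ?j] by auto
  qed
qed

lemma distant_parameter_gap:
  assumes "i + 2 \<le> j" "j \<le> N" "t \<le> cw i" "cw (j - 1) \<le> u"
  shows "w_min \<le> u - t"
proof -
  have "cw (i + 1) \<le> cw (j - 1)" using assms by (intro cw_mono) auto
  moreover have "cw (i + 1) = cw i + w (i + 1)" using cw_Suc[of i] by simp
  moreover have "w_min \<le> w (i + 1)" using assms by (intro w_min(2)) auto
  ultimately show ?thesis using assms by linarith
qed

text \<open>
  Induction on the scale of \<open>u - t\<close>: a pair inside one interval is the \<open>\<tau>\<close>-image of a pair
  at least \<open>1 / w_max\<close> times farther apart.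
\<close>

lemma parameter_pair_induct:
  assumes "t \<in> {0..1}" "u \<in> {0..1}" "t < u"
    and same: "\<And>i x y. i \<in> {1..N} \<Longrightarrow> x \<in> {0..1} \<Longrightarrow> y \<in> {0..1} \<Longrightarrow> x < y \<Longrightarrow> P x y \<Longrightarrow>
      P (\<tau> i x) (\<tau> i y)"
    and adjacent: "\<And>i t u. i \<in> {1..<N} \<Longrightarrow> t \<in> {cw (i - 1)..cw i} \<Longrightarrow> u \<in> {cw i..cw (i + 1)} \<Longrightarrow>
      t < u \<Longrightarrow> P t u"
    and distant: "\<And>i j t u. i \<in> {1..N} \<Longrightarrow> j \<in> {1..N} \<Longrightarrow> i + 2 \<le> j \<Longrightarrow>
      t \<in> {cw (i - 1)..cw i} \<Longrightarrow> u \<in> {cw (j - 1)..cw j} \<Longrightarrow> t < u \<Longrightarrow> P t u"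
  shows "P t u"
proof -
  have scaled: "P t u" if "t \<in> {0..1}" "u \<in> {0..1}" "t < u" "w_max ^ k \<le> u - t" for k t u
    using that
  proof (induction k arbitrary: t u)
    case k: (Suc k)
    from k.prems(1-3) show ?case
    proof (cases rule: parameter_pair_cases)
      case (same i)
      obtain x y where x: "x \<in> {0..1}" "t = \<tau> i x" and y: "y \<in> {0..1}" "u = \<tau> i y"
        using \<tau>_inverse[OF same(1)] same(2,3) by metis
      have "u - t = w i * (y - x)" using x y \<tau>_diff by simp
      then have "0 < w i * (y - x)" using k.prems(3) by simp
      then have "x < y" using w_pos[OF same(1)] by (simp add: zero_less_mult_iff)
      have "w_max * w_max ^ k \<le> w i * (y - x)" using k.prems(4) \<open>u - t = w i * (y - x)\<close> by simp
      also have "\<dots> \<le> w_max * (y - x)"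
        using w_max(3)[OF same(1)] \<open>x < y\<close> by (intro mult_right_mono) auto
      finally have "w_max ^ k \<le> y - x" using w_max(1) by simp
      then have "P x y" using k.IH[OF x(1) y(1) \<open>x < y\<close>] by simp
      then show ?thesis using same(1) x y \<open>x < y\<close> by (auto intro: assms(4))
    qed (use adjacent distant k.prems in blast)+
  next
    case 0
    from 0(1-3) show ?case
    proof (cases rule: parameter_pair_cases)
      case (same i)
      then have "u - t \<le> w i" using cw_pred[OF same(1)] by simp
      then show ?thesis using 0(4) w_lt_1[OF same(1)] by simp
    qed (use adjacent distant 0 in blast)+
  qed
  obtain k where "w_max ^ k < u - t"
    using real_arch_pow_inv[of "u - t" w_max] w_max \<open>t < u\<close> by auto
  then show ?thesis using scaled[OF assms(1-3)] less_imp_le by blast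
qed

lemma dist_param_upper_ordered:
  assumes "t \<in> {0..1}" "u \<in> {0..1}" "t < u"
  shows "dist (param t) (param u) \<le> 2 * holder_const * (u - t) powr (1/s)"
proof (rule parameter_pair_induct[OF assms])
  fix i x y assume i: "i \<in> {1..N}" and x: "x \<in> {0..1}" and y: "y \<in> {0..1}" and "x < y"
    and IH: "dist (param x) (param y) \<le> 2 * holder_const * (y - x) powr (1/s)"
  show "dist (param (\<tau> i x)) (param (\<tau> i y)) \<le> 2 * holder_const * (\<tau> i y - \<tau> i x) powr (1/s)"
    unfolding dist_param_\<tau>[OF i x y] \<tau>_diff_powr[OF i less_imp_le[OF \<open>x < y\<close>]]
    using mult_left_mono[OF IH, of "r i"] r_pos[OF i] by (simp add: ac_simps)
next
  fix i t u assume i: "i \<in> {1..<N}" and t: "t \<in> {cw (i - 1)..cw i}"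
    and u: "u \<in> {cw i..cw (i + 1)}" and "t < u"
  have i': "i \<in> {1..N}" "i + 1 \<in> {1..N}" using i by auto
  have "dist (param t) (param (cw i)) \<le> holder_const * (cw i - t) powr (1/s)"
    by (rule dist_param_piece_ends(4)[OF i'(1) t])
  also have "\<dots> \<le> holder_const * (u - t) powr (1/s)"
    using t u holder_const_nonneg by (intro mult_left_mono powr_s_mono) auto
  finally have "dist (param t) (param (cw i)) \<le> holder_const * (u - t) powr (1/s)" .
  moreover have "dist (param u) (param (cw i)) \<le> holder_const * (u - cw i) powr (1/s)"
    using dist_param_piece_ends(2)[OF i'(2)] u by simp
  moreover have "\<dots> \<le> holder_const * (u - t) powr (1/s)"
    using t u holder_const_nonneg by (intro mult_left_mono powr_s_mono) auto
  moreover have "dist (param t) (param u) \<le> dist (param t) (param (cw i)) + dist (param u) (param (cw i))"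
    by (rule dist_triangle2)
  ultimately show "dist (param t) (param u) \<le> 2 * holder_const * (u - t) powr (1/s)" by linarith
next
  fix i j t u assume ij: "i \<in> {1..N}" "j \<in> {1..N}" "i + 2 \<le> j"
    and t: "t \<in> {cw (i - 1)..cw i}" and u: "u \<in> {cw (j - 1)..cw j}"
  then have "w_min \<le> u - t" by (intro distant_parameter_gap[of i j]) auto
  then have "dist (param t) (param u) \<le> holder_const * (u - t) powr (1/s)"
    using cw_interval_unit[OF ij(1) t] cw_interval_unit[OF ij(2) u] by (intro dist_param_le_holder_const)
  moreover have "holder_const * (u - t) powr (1/s) \<le> 2 * holder_const * (u - t) powr (1/s)"
    using holder_const_nonneg by (intro mult_right_mono) auto
  ultimately show "dist (param t) (param u) \<le> 2 * holder_const * (u - t) powr (1/s)" by linarith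
qed

lemma dist_param_upper:
  assumes "t \<in> {0..1}" "u \<in> {0..1}"
  shows "dist (param t) (param u) \<le> 2 * holder_const * \<bar>t - u\<bar> powr (1/s)"
proof (cases t u rule: linorder_cases)
  case less
  then show ?thesis using dist_param_upper_ordered[OF assms] by simp
next
  case greater
  then show ?thesis using dist_param_upper_ordered[OF assms(2,1)] by (simp add: dist_commute)
qed simp

lemma continuous_on_param: "continuous_on {0..1} param"
  using s_pos dist_param_upper by (intro holder_continuous_on[of "1/s"]) auto

lemma param_image: "param ` {0..1} = \<gamma>"
proof
  show "param ` {0..1} \<subseteq> \<gamma>" using param_in by blast
  have "compact (param ` {0..1})" by (intro compact_continuous_image continuous_on_param) simp
  show "\<gamma> \<subseteq> param ` {0..1}"
  proof (rule subset_closed_if_contractions_invariant[where I = "{1..N}" and T = S and \<rho> = r])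
    show "compact \<gamma>" "\<gamma> \<subseteq> (\<Union>i\<in>{1..N}. S i ` \<gamma>)" "param ` {0..1} \<noteq> {}"
      using compact invariant by auto
    show "closed (param ` {0..1})" using \<open>compact (param ` {0..1})\<close> by (rule compact_imp_closed)
    fix i assume i: "i \<in> {1..N}"
    show "S i ` param ` {0..1} \<subseteq> param ` {0..1}"
    proof
      fix y assume "y \<in> S i ` param ` {0..1}"
      then obtain x where "x \<in> {0..1}" "y = param (\<tau> i x)" using param_\<tau>[OF i] by auto
      then show "y \<in> param ` {0..1}" using \<tau>_in_unit[OF i] by blast
    qed
    show "dist (S i x) (S i y) \<le> r i * dist x y" for x y using dist_S[OF i] by simp
    show "0 \<le> r i \<and> r i < 1" using r_pos[OF i] r_lt_1[OF i] by simp
  qed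
qed

lemma connected_gamma: "connected \<gamma>"
  using connected_continuous_image[OF continuous_on_param connected_Icc] param_image by simp

lemma connected_S: "i \<in> {1..N} \<Longrightarrow> connected (S i ` \<gamma>)"
  using connected_continuous_image[OF continuous_on_S connected_gamma] .

lemma adjacent_pieces_junction:
  obtains \<delta> where "\<delta> > 0"
    "\<And>i x y. i \<in> {1..<N} \<Longrightarrow> x \<in> S i ` \<gamma> \<Longrightarrow> y \<in> S (i + 1) ` \<gamma> \<Longrightarrow>
      \<delta> * dist x (S (i + 1) a) \<le> dist x y \<and> \<delta> * dist y (S (i + 1) a) \<le> dist x y"
proof -
  obtain h g where hg: "homeomorphism \<gamma> {0..1::real} h g" and "quasisymmetric_on \<gamma> h"
    using quasisymmetric unfolding quasisymmetrically_equivalent_def by blast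
  obtain \<delta> where "\<delta> > 0" and \<delta>: "\<And>x y z. x \<in> \<gamma> \<Longrightarrow> y \<in> \<gamma> \<Longrightarrow> z \<in> \<gamma> \<Longrightarrow>
      dist (h x) (h z) \<le> dist (h x) (h y) \<Longrightarrow> \<delta> * dist x z \<le> dist x y"
    using quasisymmetric_on_inverse_bound[OF \<open>quasisymmetric_on \<gamma> h\<close>] by blast
  have "continuous_on \<gamma> h" "inj_on h \<gamma>"
    using hg unfolding homeomorphism_def by (auto intro: inj_on_inverseI)
  have interval: "is_interval (h ` S i ` \<gamma>)" if "i \<in> {1..N}" for i
    using connected_continuous_image[OF continuous_on_subset[OF \<open>continuous_on \<gamma> h\<close> S_subset]
        connected_S] that is_interval_connected_1 by blast
  \<comment> \<open>h maps adjacent pieces to intervals meeting only at the image of the junction point\<close>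
  show thesis
  proof (rule that[OF \<open>\<delta> > 0\<close>])
    fix i x y assume i: "i \<in> {1..<N}" and x: "x \<in> S i ` \<gamma>" and y: "y \<in> S (i + 1) ` \<gamma>"
    let ?z = "S (i + 1) a"
    have i': "i \<in> {1..N}" "i + 1 \<in> {1..N}" using i by auto
    have "h ` S i ` \<gamma> \<inter> h ` S (i + 1) ` \<gamma> = {h ?z}"
      using inj_on_image_Int[OF \<open>inj_on h \<gamma>\<close> S_subset[OF i'(1)] S_subset[OF i'(2)]] adjacent_pieces[OF i]
      by simp
    then have "dist (h x) (h ?z) \<le> dist (h x) (h y) \<and> dist (h y) (h ?z) \<le> dist (h x) (h y)"
      using x y by (intro touching_intervals_between[OF interval[OF i'(1)] interval[OF i'(2)]]) auto
    then have "dist (h x) (h ?z) \<le> dist (h x) (h y)" "dist (h y) (h ?z) \<le> dist (h y) (h x)"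
      by (simp_all add: dist_commute)
    moreover have "x \<in> \<gamma>" "y \<in> \<gamma>" "?z \<in> \<gamma>"
      using x y S_subset[OF i'(1)] S_subset[OF i'(2)] a_in by auto
    ultimately have "\<delta> * dist x ?z \<le> dist x y" "\<delta> * dist y ?z \<le> dist y x"
      using \<delta> by blast+
    then show "\<delta> * dist x ?z \<le> dist x y \<and> \<delta> * dist y ?z \<le> dist x y"
      by (simp add: dist_commute)
  qed
qed

lemma distant_pieces_separation:
  obtains d where "d > 0"
    "\<And>i j x y. i \<in> {1..N} \<Longrightarrow> j \<in> {1..N} \<Longrightarrow> i + 2 \<le> j \<Longrightarrow> x \<in> S i ` \<gamma> \<Longrightarrow> y \<in> S j ` \<gamma> \<Longrightarrow>
      d \<le> dist x y"
proof -
  define D where "D = {setdist (S i ` \<gamma>) (S j ` \<gamma>) | i j. i \<in> {1..N} \<and> j \<in> {1..N} \<and> i + 2 \<le> j}"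
  have "D \<subseteq> {setdist (S i ` \<gamma>) (S j ` \<gamma>) | i j. i \<in> {1..N} \<and> j \<in> {1..N}}"
    unfolding D_def by blast
  then have "finite D" by (rule finite_subset) (intro finite_image_set2; simp)
  have "0 < setdist (S i ` \<gamma>) (S j ` \<gamma>)" if i: "i \<in> {1..N}" and j: "j \<in> {1..N}" and "i + 2 \<le> j" for i j
  proof -
    obtain x y where "x \<in> S i ` \<gamma>" "y \<in> S j ` \<gamma>" and "dist x y = setdist (S i ` \<gamma>) (S j ` \<gamma>)"
      using setdist_compact_closed[OF compact_S[OF i] compact_imp_closed[OF compact_S[OF j]]] nonempty
      by blast
    moreover have "x \<noteq> y" using calculation distant_pieces_disjoint[OF i j \<open>i + 2 \<le> j\<close>] by blast
    ultimately show ?thesis by (metis zero_less_dist_iff)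
  qed
  then have "\<forall>e\<in>insert 1 D. 0 < e" unfolding D_def by fastforce
  then have "0 < Min (insert 1 D)" using \<open>finite D\<close> by (simp add: Min_gr_iff)
  then show thesis
  proof (rule that)
    fix i j x y assume "i \<in> {1..N}" "j \<in> {1..N}" "i + 2 \<le> j" "x \<in> S i ` \<gamma>" "y \<in> S j ` \<gamma>"
    then have "setdist (S i ` \<gamma>) (S j ` \<gamma>) \<in> insert 1 D" unfolding D_def by blast
    then have "Min (insert 1 D) \<le> setdist (S i ` \<gamma>) (S j ` \<gamma>)" using \<open>finite D\<close> by simp
    also have "\<dots> \<le> dist x y" using \<open>x \<in> S i ` \<gamma>\<close> \<open>y \<in> S j ` \<gamma>\<close> by (rule setdist_le_dist)
    finally show "Min (insert 1 D) \<le> dist x y" .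
  qed
qed

lemma dist_param_adjacent_lower:
  assumes junction_bound: "\<And>x y. x \<in> S i ` \<gamma> \<Longrightarrow> y \<in> S (i + 1) ` \<gamma> \<Longrightarrow>
      \<delta> * dist x (S (i + 1) a) \<le> dist x y \<and> \<delta> * dist y (S (i + 1) a) \<le> dist x y"
    and "\<delta> > 0" and i: "i \<in> {1..<N}" and t: "t \<in> {cw (i - 1)..cw i}" and u: "u \<in> {cw i..cw (i + 1)}"
    and "t < u"
  shows "\<delta> * end_gap * ((u - t) / 2) powr (1/s) \<le> dist (param t) (param u)"
proof -
  have i': "i \<in> {1..N}" "i + 1 \<in> {1..N}" using i by auto
  have "param (cw i) = S (i + 1) a" using param_\<tau>[OF i'(2), of 0] by (simp add: \<tau>_0 param_0)
  moreover have "param t \<in> S i ` \<gamma>" "param u \<in> S (i + 1) ` \<gamma>"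
    using param_piece[OF i'(1) t] param_piece[OF i'(2)] u by simp_all
  ultimately have junction_t: "\<delta> * dist (param t) (param (cw i)) \<le> dist (param t) (param u)"
    and junction_u: "\<delta> * dist (param u) (param (cw i)) \<le> dist (param t) (param u)"
    using junction_bound by auto
  show ?thesis
  proof (cases "(u - t) / 2 \<le> cw i - t")
    case True
    then have "end_gap * ((u - t) / 2) powr (1/s) \<le> end_gap * (cw i - t) powr (1/s)"
      using \<open>t < u\<close> end_gap_pos by (intro mult_left_mono powr_s_mono) auto
    also have "\<dots> \<le> dist (param t) (param (cw i))" by (rule dist_param_piece_ends(3)[OF i'(1) t])
    finally have "\<delta> * (end_gap * ((u - t) / 2) powr (1/s)) \<le> \<delta> * dist (param t) (param (cw i))"
      using \<open>\<delta> > 0\<close> by (simp add: mult_left_mono)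
    then show ?thesis using junction_t by (simp add: mult.assoc)
  next
    case False
    then have "end_gap * ((u - t) / 2) powr (1/s) \<le> end_gap * (u - cw i) powr (1/s)"
      using \<open>t < u\<close> end_gap_pos by (intro mult_left_mono powr_s_mono) auto
    also have "\<dots> \<le> dist (param u) (param (cw i))" using dist_param_piece_ends(1)[OF i'(2)] u by simp
    finally have "\<delta> * (end_gap * ((u - t) / 2) powr (1/s)) \<le> \<delta> * dist (param u) (param (cw i))"
      using \<open>\<delta> > 0\<close> by (simp add: mult_left_mono)
    then show ?thesis using junction_u by (simp add: mult.assoc)
  qed
qed

lemma dist_param_lower:
  obtains c where "c > 0"
    "\<And>t u. t \<in> {0..1} \<Longrightarrow> u \<in> {0..1} \<Longrightarrow> c * \<bar>t - u\<bar> powr (1/s) \<le> dist (param t) (param u)"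
proof -
  obtain \<delta> where "\<delta> > 0" and junction_bound: "\<And>i x y. i \<in> {1..<N} \<Longrightarrow> x \<in> S i ` \<gamma> \<Longrightarrow>
      y \<in> S (i + 1) ` \<gamma> \<Longrightarrow> \<delta> * dist x (S (i + 1) a) \<le> dist x y \<and> \<delta> * dist y (S (i + 1) a) \<le> dist x y"
    using adjacent_pieces_junction by blast
  obtain d where "d > 0" and separation: "\<And>i j x y. i \<in> {1..N} \<Longrightarrow> j \<in> {1..N} \<Longrightarrow> i + 2 \<le> j \<Longrightarrow>
      x \<in> S i ` \<gamma> \<Longrightarrow> y \<in> S j ` \<gamma> \<Longrightarrow> d \<le> dist x y"
    using distant_pieces_separation by blast
  define c where "c = min d (\<delta> * end_gap / 2 powr (1/s))"
  have "c > 0" unfolding c_def using \<open>d > 0\<close> \<open>\<delta> > 0\<close> end_gap_pos by simp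
  have ordered: "c * (u - t) powr (1/s) \<le> dist (param t) (param u)"
    if "t \<in> {0..1}" "u \<in> {0..1}" "t < u" for t u
  proof (rule parameter_pair_induct[OF that])
    fix i x y assume i: "i \<in> {1..N}" and x: "x \<in> {0..1}" and y: "y \<in> {0..1}" and "x < y"
      and IH: "c * (y - x) powr (1/s) \<le> dist (param x) (param y)"
    show "c * (\<tau> i y - \<tau> i x) powr (1/s) \<le> dist (param (\<tau> i x)) (param (\<tau> i y))"
      unfolding dist_param_\<tau>[OF i x y] \<tau>_diff_powr[OF i less_imp_le[OF \<open>x < y\<close>]]
      using mult_left_mono[OF IH, of "r i"] r_pos[OF i] by (simp add: ac_simps)
  next
    fix i t u assume i: "i \<in> {1..<N}" and t: "t \<in> {cw (i - 1)..cw i}"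
      and u: "u \<in> {cw i..cw (i + 1)}" and "t < u"
    have "c * (u - t) powr (1/s) \<le> \<delta> * end_gap / 2 powr (1/s) * (u - t) powr (1/s)"
      unfolding c_def by (intro mult_right_mono) auto
    also have "\<dots> = \<delta> * end_gap * ((u - t) / 2) powr (1/s)"
      using \<open>t < u\<close> by (simp add: powr_divide)
    also have "\<dots> \<le> dist (param t) (param u)"
      using junction_bound[OF i] \<open>\<delta> > 0\<close> i t u \<open>t < u\<close> by (rule dist_param_adjacent_lower)
    finally show "c * (u - t) powr (1/s) \<le> dist (param t) (param u)" .
  next
    fix i j t u assume ij: "i \<in> {1..N}" "j \<in> {1..N}" "i + 2 \<le> j"
      and t: "t \<in> {cw (i - 1)..cw i}" and u: "u \<in> {cw (j - 1)..cw j}" and "t < u"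
    have "c * (u - t) powr (1/s) \<le> d * 1"
      using powr_s_le_1[of "u - t"] cw_interval_unit[OF ij(1) t] cw_interval_unit[OF ij(2) u] \<open>t < u\<close>
        \<open>c > 0\<close> unfolding c_def by (intro mult_mono) auto
    also have "\<dots> \<le> dist (param t) (param u)"
      using separation[OF ij param_piece[OF ij(1) t] param_piece[OF ij(2) u]] by simp
    finally show "c * (u - t) powr (1/s) \<le> dist (param t) (param u)" .
  qed
  show thesis
  proof (rule that[OF \<open>c > 0\<close>])
    fix t u :: real assume "t \<in> {0..1}" "u \<in> {0..1}"
    then show "c * \<bar>t - u\<bar> powr (1/s) \<le> dist (param t) (param u)"
      using ordered[of t u] ordered[of u t] by (cases t u rule: linorder_cases) (auto simp: dist_commute)
  qed
qed

lemma snowflake_parametrization_param: "snowflake_parametrization (1/s) param \<gamma>"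
proof -
  obtain c where "c > 0" and lower: "\<And>t u. t \<in> {0..1} \<Longrightarrow> u \<in> {0..1} \<Longrightarrow>
      c * \<bar>t - u\<bar> powr (1/s) \<le> dist (param t) (param u)"
    using dist_param_lower by blast
  have "dist (param t) (param u) \<le> (2 * holder_const + 1) * \<bar>t - u\<bar> powr (1/s)" if "t \<in> {0..1}" "u \<in> {0..1}" for t u
    using dist_param_upper[OF that] by (smt (verit) mult_right_mono powr_ge_zero)
  moreover have "0 < 2 * holder_const + 1" using holder_const_nonneg by simp
  ultimately show ?thesis
    unfolding snowflake_parametrization_def using param_image \<open>c > 0\<close> lower by blast
qed

end

lemma IFS_quasiarc_snowflake:
  assumes "IFS_quasiarc N S r \<gamma>"
  shows "\<exists>f. snowflake_parametrization (1 / similarity_dimension N r) f \<gamma>"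
proof -
  obtain a b where "contracting_IFS N S r" "invariant_set N S \<gamma>"
    and ab: "S 1 a = a" "S N b = b" "\<forall>i\<in>{1..<N}. S i b = S (i + 1) a"
      "\<forall>i\<in>{1..<N}. S i ` \<gamma> \<inter> S (i + 1) ` \<gamma> = {S (i + 1) a}"
      "\<forall>i\<in>{1..N}. \<forall>j\<in>{1..N}. \<bar>int i - int j\<bar> > 1 \<longrightarrow> S i ` \<gamma> \<inter> S j ` \<gamma> = {}"
    and "quasisymmetrically_equivalent \<gamma> {0..1::real}"
    using assms unfolding IFS_quasiarc_def IFS_arc_def by blast
  then have "N \<ge> 2" and "\<And>i. i \<in> {1..N} \<Longrightarrow> 0 < r i \<and> r i < 1 \<and> similarity_with_ratio (S i) (r i)"
    unfolding contracting_IFS_def by auto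
  then have "IFS_quasiarc_setting N S r \<gamma> (similarity_dimension N r) a b"
    using similarity_dimension_Moran[of N r] ab \<open>invariant_set N S \<gamma>\<close> \<open>quasisymmetrically_equivalent \<gamma> {0..1}\<close>
    unfolding IFS_quasiarc_setting_def invariant_set_def by blast
  then show ?thesis using IFS_quasiarc_setting.snowflake_parametrization_param by blast
qed

theorem corollary1p6:
  fixes S :: "nat \<Rightarrow> 'a::euclidean_space \<Rightarrow> 'a" and \<alpha> :: "'a set"
    and S' :: "nat \<Rightarrow> 'b::euclidean_space \<Rightarrow> 'b" and \<beta> :: "'b set"
    and r r' :: "nat \<Rightarrow> real" and N M :: nat
  assumes "IFS_quasiarc N S r \<alpha>"
    and "IFS_quasiarc M S' r' \<beta>"
    and "similarity_dimension N r = similarity_dimension M r'"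
  shows "bi_lipschitz_equivalent \<alpha> \<beta>"
proof -
  obtain f where "snowflake_parametrization (1 / similarity_dimension N r) f \<alpha>"
    using IFS_quasiarc_snowflake[OF assms(1)] by blast
  moreover obtain g where "snowflake_parametrization (1 / similarity_dimension N r) g \<beta>"
    using IFS_quasiarc_snowflake[OF assms(2)] unfolding assms(3) by blast
  ultimately show ?thesis by (rule bi_lipschitz_equivalent_if_snowflake_parametrizations)
qed

end
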